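(* Let $A$ be a real $m\times m$ matrix, $f_\delta\in\mathbb{R}^m$, $q\in(0,1)$, $\alpha_0>0$, and define $G_0=0$, $G_n=qG_{n-1}+(1-q)\alpha_0q^n\|Q_{\alpha_0q^n}^{-1}f_\delta\|$ for $n\ge1$. Let $D_n:=\alpha_0q^{n+1}\|Q_{\alpha_0q^{n+1}}^{-1}f_\delta\|-G_n$, so that $G_{n+1}-G_n=(1-q)D_n$. If $D_{n_c}<0$ for some integer $n_c\ge1$ (equivalently $G_{n_c+1}<G_{n_c}$), then $D_n<0$ for all $n\ge n_c$; consequently $G_{n+1}<G_n$ for all $n\ge n_c$.
   Context: $A^*$ is the transpose of $A$, $Q:=AA^*$, $Q_a:=Q+aI$ for $a>0$; $\|\cdot\|$ is the Euclidean norm. *)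

theory Defs
  imports "HOL-Analysis.Analysis"
begin

definition Qmat :: "real^'m^'m \<Rightarrow> real^'m^'m" where
  "Qmat A = A ** transpose A"

definition Qreg :: "real^'m^'m \<Rightarrow> real \<Rightarrow> real^'m^'m" where
  "Qreg A a = Qmat A + mat a"

fun Gseq :: "real^'m^'m \<Rightarrow> real^'m \<Rightarrow> real \<Rightarrow> real \<Rightarrow> nat \<Rightarrow> real" where
  "Gseq A f q \<alpha>0 0 = 0"
| "Gseq A f q \<alpha>0 (Suc n) = q * Gseq A f q \<alpha>0 n
     + (1 - q) * \<alpha>0 * q ^ Suc n * norm (matrix_inv (Qreg A (\<alpha>0 * q ^ Suc n)) *v f)"

definition Dseq :: "real^'m^'m \<Rightarrow> real^'m \<Rightarrow> real \<Rightarrow> real \<Rightarrow> nat \<Rightarrow> real" where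
  "Dseq A f q \<alpha>0 n = \<alpha>0 * q ^ (n + 1) * norm (matrix_inv (Qreg A (\<alpha>0 * q ^ (n + 1))) *v f)
     - Gseq A f q \<alpha>0 n"

end

theory Submission
  imports Defs
begin

(* Write r(a) = a * norm (Q_a^{-1} f) for the residual norm of the
   Tikhonov-regularised system Q x + a x = f.  The whole lemma rests on one fact:
   r is nondecreasing in a > 0.  For 0 < b <= a put u = Q_a^{-1} f, v = Q_b^{-1} f
   and w = Q_a^{-1} v; the resolvent identity  a u = b v + (a - b) Q w  together with
   <v, Q w> = |Q w|^2 + a <w, Q w> >= 0 (Q = A A^T is positive semidefinite)
   gives |a u| >= |b v|.
   Since alpha0 q^n decreases, D_{n+1} = r_{n+2} - q G_n - (1-q) r_{n+1} <= q D_n,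
   so once D_n is negative it stays negative; and G_{n+1} - G_n = (1-q) D_n. *)

lemma mat_apply: "mat a *v x = a *\<^sub>R (x::real^'n)"
  apply (vector matrix_vector_mult_def mat_def)
  apply (simp add: if_distrib if_distribR cong del: if_weak_cong)
  done

lemma Qreg_apply: "Qreg A a *v x = Qmat A *v x + a *\<^sub>R x"
  by (simp add: Qreg_def matrix_vector_mult_add_rdistrib mat_apply)

lemma Qmat_inner: "x \<bullet> (Qmat A *v y) = (transpose A *v x) \<bullet> (transpose A *v y)"
  unfolding Qmat_def
  by (metis dot_lmul_matrix matrix_vector_mul_assoc transpose_matrix_vector transpose_transpose)

lemma Qmat_psd: "0 \<le> x \<bullet> (Qmat A *v x)"
  by (simp add: Qmat_inner)

lemma Qmat_Qreg_commute: "Qmat A *v (Qreg A a *v x) = Qreg A a *v (Qmat A *v x)"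
  by (simp add: Qreg_apply matrix_vector_right_distrib matrix_vector_mult_scaleR)

lemma Qreg_inj:
  assumes "0 < a" shows "inj ((*v) (Qreg A a))"
proof -
  have "x = 0" if "Qreg A a *v x = 0" for x
  proof -
    have "0 = x \<bullet> (Qreg A a *v x)" using that by simp
    also have "\<dots> = x \<bullet> (Qmat A *v x) + a * (x \<bullet> x)"
      by (simp add: Qreg_apply inner_add_right)
    finally have "a * (x \<bullet> x) \<le> 0" using Qmat_psd[of x A] by linarith
    with assms have "x \<bullet> x \<le> 0" by (simp add: mult_le_0_iff)
    then show ?thesis by (metis inner_eq_zero_iff order_antisym inner_ge_zero)
  qed
  then show ?thesis
    by (metis matrix_left_invertible_injective matrix_left_invertible_ker)
qed

lemma Qreg_solves:
  assumes "0 < a" shows "Qreg A a *v (matrix_inv (Qreg A a) *v y) = y"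
proof -
  have "invertible (Qreg A a)"
    using Qreg_inj[OF assms] invertible_left_inverse matrix_left_invertible_injective by blast
  then have "Qreg A a ** matrix_inv (Qreg A a) = mat 1"
    unfolding invertible_def matrix_inv_def by (rule someI_ex[THEN conjunct1])
  then show ?thesis by (metis matrix_vector_mul_assoc matrix_vector_mul_lid)
qed

lemma resolvent_identity:
  fixes A :: "real^'m^'m" and f :: "real^'m"
  assumes a: "0 < a" and b: "0 < b"
  defines "u \<equiv> matrix_inv (Qreg A a) *v f"
    and "v \<equiv> matrix_inv (Qreg A b) *v f"
  defines "w \<equiv> matrix_inv (Qreg A a) *v v"
  shows "a *\<^sub>R u = b *\<^sub>R v + (a - b) *\<^sub>R (Qmat A *v w)"
proof -
  have hu: "Qreg A a *v u = f" and hw: "Qreg A a *v w = v"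
    using Qreg_solves[OF a] by (simp_all add: u_def w_def)
  have hv: "Qmat A *v v + b *\<^sub>R v = f"
    using Qreg_solves[OF b, of A f] by (simp add: Qreg_apply v_def)
  have "Qreg A a *v (b *\<^sub>R v + (a - b) *\<^sub>R (Qmat A *v w))
        = b *\<^sub>R (Qreg A a *v v) + (a - b) *\<^sub>R (Qmat A *v v)"
    by (simp add: Qmat_Qreg_commute[symmetric] hw matrix_vector_right_distrib
        matrix_vector_mult_scaleR)
  also have "\<dots> = a *\<^sub>R (Qmat A *v v + b *\<^sub>R v)"
    by (simp add: Qreg_apply algebra_simps)
  also have "\<dots> = Qreg A a *v (a *\<^sub>R u)"
    by (simp add: hv hu matrix_vector_mult_scaleR)
  finally show ?thesis
    using Qreg_inj[OF a, of A] by (metis injD)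
qed

lemma resolvent_cross_nonneg:
  assumes a: "0 < a"
  shows "0 \<le> v \<bullet> (Qmat A *v (matrix_inv (Qreg A a) *v v))"
proof -
  define w where "w = matrix_inv (Qreg A a) *v v"
  have "v = Qmat A *v w + a *\<^sub>R w"
    using Qreg_solves[OF a, of A v] by (simp add: Qreg_apply w_def)
  then have "v \<bullet> (Qmat A *v w) = (Qmat A *v w) \<bullet> (Qmat A *v w) + a * (w \<bullet> (Qmat A *v w))"
    by (metis inner_add_left inner_commute inner_scaleR_left)
  moreover have "0 \<le> w \<bullet> (Qmat A *v w)" by (rule Qmat_psd)
  ultimately show ?thesis using a unfolding w_def by simp
qed

definition residual_norm :: "real^'m^'m \<Rightarrow> real^'m \<Rightarrow> real \<Rightarrow> real" where
  "residual_norm A f a = a * norm (matrix_inv (Qreg A a) *v f)"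

lemma residual_norm_mono:
  assumes b: "0 < b" and ba: "b \<le> a"
  shows "residual_norm A f b \<le> residual_norm A f a"
proof -
  have a: "0 < a" using b ba by linarith
  define u where "u = matrix_inv (Qreg A a) *v f"
  define v where "v = matrix_inv (Qreg A b) *v f"
  define Qw where "Qw = Qmat A *v (matrix_inv (Qreg A a) *v v)"
  have "a *\<^sub>R u = b *\<^sub>R v + (a - b) *\<^sub>R Qw"
    using resolvent_identity[OF a b] by (simp add: u_def v_def Qw_def)
  then have "norm (a *\<^sub>R u) ^ 2
      = norm (b *\<^sub>R v) ^ 2 + 2 * (a - b) * b * (v \<bullet> Qw) + (a - b) ^ 2 * norm Qw ^ 2"
    by (simp only: power2_norm_eq_inner)
      (simp add: inner_add_left inner_add_right inner_commute
        algebra_simps power2_eq_square)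
  moreover have "0 \<le> v \<bullet> Qw"
    unfolding Qw_def by (rule resolvent_cross_nonneg[OF a])
  ultimately have "norm (b *\<^sub>R v) ^ 2 \<le> norm (a *\<^sub>R u) ^ 2"
    using b ba by simp
  then have "norm (b *\<^sub>R v) \<le> norm (a *\<^sub>R u)" by (simp add: power_mono_iff)
  then show ?thesis using a b by (simp add: residual_norm_def u_def v_def)
qed

lemma Gseq_Suc_residual:
  "Gseq A f q \<alpha>0 (Suc n) = q * Gseq A f q \<alpha>0 n + (1 - q) * residual_norm A f (\<alpha>0 * q ^ Suc n)"
  by (simp only: Gseq.simps residual_norm_def mult.assoc)

lemma Dseq_residual:
  "Dseq A f q \<alpha>0 n = residual_norm A f (\<alpha>0 * q ^ Suc n) - Gseq A f q \<alpha>0 n"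
  by (simp add: Dseq_def residual_norm_def)

lemma Gseq_increment:
  "Gseq A f q \<alpha>0 (n + 1) - Gseq A f q \<alpha>0 n = (1 - q) * Dseq A f q \<alpha>0 n"
  by (simp only: Suc_eq_plus1[symmetric] Gseq_Suc_residual Dseq_residual) (simp add: algebra_simps)

text \<open>Monotonicity of r makes D contract: D_{n+1} <= q D_n whenever 0 < q <= 1.\<close>
lemma Dseq_contraction:
  assumes q0: "0 < q" and q1: "q \<le> 1" and a0: "0 < \<alpha>0"
  shows "Dseq A f q \<alpha>0 (Suc n) \<le> q * Dseq A f q \<alpha>0 n"
proof -
  let ?r = "\<lambda>k. residual_norm A f (\<alpha>0 * q ^ k)" and ?G = "Gseq A f q \<alpha>0 n"
  have "?r (Suc (Suc n)) \<le> ?r (Suc n)"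
  proof (rule residual_norm_mono)
    show "0 < \<alpha>0 * q ^ Suc (Suc n)" using q0 a0 by simp
    have "q ^ Suc (Suc n) \<le> q ^ Suc n" using q0 q1 by (intro power_decreasing) auto
    then show "\<alpha>0 * q ^ Suc (Suc n) \<le> \<alpha>0 * q ^ Suc n" using a0 by simp
  qed
  then have "?r (Suc (Suc n)) - q * ?G - (1 - q) * ?r (Suc n) \<le> q * (?r (Suc n) - ?G)"
    by (simp add: algebra_simps)
  then show ?thesis by (simp only: Dseq_residual Gseq_Suc_residual diff_diff_eq)
qed

lemma Dseq_negative_persists:
  assumes "0 < q" and "q \<le> 1" and "0 < \<alpha>0"
    and "Dseq A f q \<alpha>0 nc < 0" and "nc \<le> n"
  shows "Dseq A f q \<alpha>0 n < 0"
  using \<open>nc \<le> n\<close>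
proof (induction n rule: dec_induct)
  case base then show ?case using assms(4) .
next
  case (step m)
  have "Dseq A f q \<alpha>0 (Suc m) \<le> q * Dseq A f q \<alpha>0 m"
    using Dseq_contraction assms(1-3) by blast
  also have "\<dots> < 0" using step.IH assms(1) by (simp add: mult_pos_neg)
  finally show ?case .
qed

theorem lemma2p5:
  fixes A :: "real^'m^'m" and f :: "real^'m" and q \<alpha>0 :: real and nc :: nat
  assumes "0 < q" and "q < 1" and "0 < \<alpha>0"
    and "1 \<le> nc" and "Dseq A f q \<alpha>0 nc < 0"
  shows "\<forall>n\<ge>nc. Dseq A f q \<alpha>0 n < 0 \<and> Gseq A f q \<alpha>0 (n + 1) < Gseq A f q \<alpha>0 n"
proof (intro allI impI)
  fix n assume "nc \<le> n"
  then have D: "Dseq A f q \<alpha>0 n < 0"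
    using Dseq_negative_persists[OF assms(1) less_imp_le[OF assms(2)] assms(3,5)] by blast
  then have "(1 - q) * Dseq A f q \<alpha>0 n < 0"
    using assms(2) by (simp add: mult_pos_neg)
  then show "Dseq A f q \<alpha>0 n < 0 \<and> Gseq A f q \<alpha>0 (n + 1) < Gseq A f q \<alpha>0 n"
    using D Gseq_increment[of A f q \<alpha>0 n] by linarith
qed

end
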